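(* If $\Gamma$ has a cyclic fractional polymorphism of arity $m>1$, then the lifted language $\Gamma'$ (defined below) also has a cyclic fractional polymorphism of arity $m$.
   Context: $\Gamma$ is a finite set of cost functions $f:D^n\to\mathbb Q\cup\{\infty\}$ over finite $D$; $\mathrm{dom} f=\{x: f(x)<\infty\}$, also viewed as the $\{0,\infty\}$-valued function that is $0$ on $\mathrm{dom} f$. Let $\mathcal I$ be a feasible instance of $\mathrm{VCSP}(\Gamma)$ with variables $V$, constraints $t\in T$ with $f_t\in\Gamma$ of arity $n_t$ on variables $v(t,1),\dots,v(t,n_t)$. $D_v$ is the set of values $\sigma(v)$ over feasible solutions $\sigma$ of $\mathcal I$; $D'_v=\{(v,a):a\in D_v\}$ and $D'=\bigcup_{v\in V}D'_v$. For $n$-ary $f$ over $D$ and $v_1,\dots,v_n\in V$, $f^{\langle v_1,\dots,v_n\rangle}$ on $(D')^n$ equals $f(\hat x)$ at $((v_1,\hat x_1),\dots,(v_n,\hat x_n))$ and $\infty$ elsewhere. $\Gamma'=\bigcup_{t\in T}\{f_t^{\langle v(t,1),\dots,v(t,n_t)\rangle},\mathrm{dom} f_t^{\langle v(t,1),\dots,v(t,n_t)\rangle}\}\cup\{u_{D'_v}:v\in V\}\cup\{=_{D'}\}$, where $u_{D'_v}$ is $0$ on $D'_v$ and $\infty$ elsewhere on $D'$, and $=_{D'}$ is the binary function that is $0$ on equal pairs and $\infty$ otherwise. An $m$-ary fractional polymorphism of a language over a domain $E$ is a probability distribution $\omega$ on operations $g:E^m\to E$ such that for each $f$ in the language and $x^1,\dots,x^m\in\mathrm{dom}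 f$, $\sum_g\omega(g)f(g(x^1,\dots,x^m))\le\frac1m\sum_i f(x^i)$ (componentwise application); it is cyclic if all operations in its support satisfy $g(x_1,\dots,x_m)=g(x_2,\dots,x_m,x_1)$. *)

theory Defs
  imports "HOL-Library.Extended_Real"
begin

text \<open>A cost function of arity n over a domain is represented as a pair (n, f) with
  f applied to lists of length n.\<close>

type_synonym ('a) costfun = "nat \<times> ('a list \<Rightarrow> ereal)"

definition tuples :: "'a set \<Rightarrow> nat \<Rightarrow> 'a list set" where
  "tuples E n = {x. length x = n \<and> set x \<subseteq> E}"

definition valid_costfun :: "'a set \<Rightarrow> 'a costfun \<Rightarrow> bool" where
  "valid_costfun D F \<longleftrightarrow> (\<forall>x \<in> tuples D (fst F).
     snd F x = \<infinity> \<or> (\<exists>q::rat. snd F x = ereal (of_rat q)))"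

definition valid_language :: "'a set \<Rightarrow> 'a costfun set \<Rightarrow> bool" where
  "valid_language D \<Gamma> \<longleftrightarrow> finite D \<and> finite \<Gamma> \<and> (\<forall>F\<in>\<Gamma>. valid_costfun D F)"

definition app_op :: "('a list \<Rightarrow> 'a) \<Rightarrow> nat \<Rightarrow> 'a list list \<Rightarrow> 'a list" where
  "app_op g n xs = map (\<lambda>j. g (map (\<lambda>x. x ! j) xs)) [0..<n]"

definition operation :: "'a set \<Rightarrow> nat \<Rightarrow> ('a list \<Rightarrow> 'a) \<Rightarrow> bool" where
  "operation E m g \<longleftrightarrow> (\<forall>x \<in> tuples E m. g x \<in> E)"

definition supp_w :: "(('a list \<Rightarrow> 'a) \<Rightarrow> real) \<Rightarrow> ('a list \<Rightarrow> 'a) set" where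
  "supp_w \<omega> = {g. \<omega> g \<noteq> 0}"

definition fractional_polymorphism ::
  "'a set \<Rightarrow> 'a costfun set \<Rightarrow> nat \<Rightarrow> (('a list \<Rightarrow> 'a) \<Rightarrow> real) \<Rightarrow> bool" where
  "fractional_polymorphism E \<Gamma> m \<omega> \<longleftrightarrow>
     finite (supp_w \<omega>) \<and> (\<forall>g. \<omega> g \<ge> 0) \<and> sum \<omega> (supp_w \<omega>) = 1 \<and>
     (\<forall>g \<in> supp_w \<omega>. operation E m g) \<and>
     (\<forall>F \<in> \<Gamma>. \<forall>xs. length xs = m \<and> (\<forall>x \<in> set xs. x \<in> tuples E (fst F) \<and> snd F x < \<infinity>) \<longrightarrow>
        (\<Sum>g \<in> supp_w \<omega>. ereal (\<omega> g) * snd F (app_op g (fst F) xs))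
          \<le> ereal (1 / real m) * sum_list (map (snd F) xs))"

definition cyclic_fp :: "'a set \<Rightarrow> nat \<Rightarrow> (('a list \<Rightarrow> 'a) \<Rightarrow> real) \<Rightarrow> bool" where
  "cyclic_fp E m \<omega> \<longleftrightarrow> (\<forall>g \<in> supp_w \<omega>. \<forall>x \<in> tuples E m. g x = g (rotate1 x))"

definition vcsp_instance :: "'a set \<Rightarrow> 'a costfun set \<Rightarrow> 'v set \<Rightarrow> 't set \<Rightarrow>
    ('t \<Rightarrow> 'a costfun) \<Rightarrow> ('t \<Rightarrow> 'v list) \<Rightarrow> bool" where
  "vcsp_instance D \<Gamma> V T c sc \<longleftrightarrow> finite V \<and> finite T \<and>
     (\<forall>t\<in>T. c t \<in> \<Gamma> \<and> length (sc t) = fst (c t) \<and> set (sc t) \<subseteq> V)"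

definition objective :: "'t set \<Rightarrow> ('t \<Rightarrow> 'a costfun) \<Rightarrow> ('t \<Rightarrow> 'v list) \<Rightarrow> ('v \<Rightarrow> 'a) \<Rightarrow> ereal" where
  "objective T c sc \<sigma> = (\<Sum>t\<in>T. snd (c t) (map \<sigma> (sc t)))"

definition feasible_sol :: "'a set \<Rightarrow> 'v set \<Rightarrow> 't set \<Rightarrow> ('t \<Rightarrow> 'a costfun) \<Rightarrow> ('t \<Rightarrow> 'v list)
    \<Rightarrow> ('v \<Rightarrow> 'a) \<Rightarrow> bool" where
  "feasible_sol D V T c sc \<sigma> \<longleftrightarrow> \<sigma> ` V \<subseteq> D \<and> objective T c sc \<sigma> < \<infinity>"

definition feasible_instance where
  "feasible_instance D V T c sc \<longleftrightarrow> (\<exists>\<sigma>. feasible_sol D V T c sc \<sigma>)"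

definition Dv :: "'a set \<Rightarrow> 'v set \<Rightarrow> 't set \<Rightarrow> ('t \<Rightarrow> 'a costfun) \<Rightarrow> ('t \<Rightarrow> 'v list) \<Rightarrow> 'v \<Rightarrow> 'a set" where
  "Dv D V T c sc v = {\<sigma> v | \<sigma>. feasible_sol D V T c sc \<sigma>}"

definition Dv' where
  "Dv' D V T c sc v = {(v, a) | a. a \<in> Dv D V T c sc v}"

definition D' where
  "D' D V T c sc = (\<Union>v\<in>V. Dv' D V T c sc v)"

definition lift_fun :: "('a list \<Rightarrow> ereal) \<Rightarrow> 'v list \<Rightarrow> ('v \<times> 'a) list \<Rightarrow> ereal" where
  "lift_fun f vs ys = (if map fst ys = vs then f (map snd ys) else \<infinity>)"

definition dom_fun :: "('b list \<Rightarrow> ereal) \<Rightarrow> 'b list \<Rightarrow> ereal" where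
  "dom_fun f ys = (if f ys < \<infinity> then 0 else \<infinity>)"

definition unary_fun :: "'b set \<Rightarrow> 'b list \<Rightarrow> ereal" where
  "unary_fun S ys = (if (\<exists>y. ys = [y] \<and> y \<in> S) then 0 else \<infinity>)"

definition eq_fun :: "'b list \<Rightarrow> ereal" where
  "eq_fun ys = (if length ys = 2 \<and> ys ! 0 = ys ! 1 then 0 else \<infinity>)"

definition lifted_language :: "'a set \<Rightarrow> 'v set \<Rightarrow> 't set \<Rightarrow> ('t \<Rightarrow> 'a costfun) \<Rightarrow> ('t \<Rightarrow> 'v list)
    \<Rightarrow> ('v \<times> 'a) costfun set" where
  "lifted_language D V T c sc =
     (\<Union>t\<in>T. {(fst (c t), lift_fun (snd (c t)) (sc t)),
              (fst (c t), dom_fun (lift_fun (snd (c t)) (sc t)))})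
     \<union> {(1, unary_fun (Dv' D V T c sc v)) | v. v \<in> V}
     \<union> {(2, eq_fun)}"

end

theory Submission
  imports Defs
begin

text \<open>Each operation g in the support of the given fractional polymorphism is lifted to D': on a
  column whose entries all belong to one variable v it keeps v and applies g to the values.
  Applying g pointwise to m feasible solutions gives a feasible solution, so every D_v is closed
  under g; hence the lifted operations preserve the unary constraints u_{D'_v}, and trivially the
  equality relation. On a lifted cost function the lifted operation acts exactly as g acts on the
  underlying values, so the fractional inequality transfers verbatim, and so does cyclicity. The
  new distribution is the pushforward of the old one along the lifting.\<close>

lemma length_app_op [simp]: "length (app_op g n xs) = n"
  by (simp add: app_op_def)

lemma nth_app_op [simp]: "j < n \<Longrightarrow> app_op g n xs ! j = g (map (\<lambda>x. x ! j) xs)"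
  by (simp add: app_op_def)

lemma app_op_in_tuples:
  assumes "operation E m g" and "length xs = m" and "set xs \<subseteq> tuples E n"
  shows "app_op g n xs \<in> tuples E n"
proof -
  have "map (\<lambda>x. x ! j) xs \<in> tuples E m" if "j < n" for j
    using assms(2,3) that by (auto simp: tuples_def subset_iff)
  then show ?thesis
    using assms(1) by (auto simp: tuples_def operation_def in_set_conv_nth)
qed

lemma sum_list_ereal_not_PInf:
  fixes l :: "ereal list"
  shows "\<forall>a\<in>set l. a \<noteq> \<infinity> \<Longrightarrow> sum_list l \<noteq> \<infinity>"
  by (induction l) auto

lemma valid_costfun_finite:
  assumes "valid_costfun D F" and "x \<in> tuples D (fst F)" and "snd F x < \<infinity>"
  shows "\<bar>snd F x\<bar> \<noteq> \<infinity>"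
  using assms unfolding valid_costfun_def by force

lemma fractional_polymorphism_cost_finite:
  assumes fp: "fractional_polymorphism D \<Gamma> m \<omega>" and F: "F \<in> \<Gamma>"
    and g: "g \<in> supp_w \<omega>" and len: "length xs = m" and m: "m > 0"
    and xs: "\<forall>x\<in>set xs. x \<in> tuples D (fst F) \<and> snd F x < \<infinity>"
  shows "snd F (app_op g (fst F) xs) < \<infinity>"
proof (rule ccontr)
  assume "\<not> ?thesis"
  then have inf: "snd F (app_op g (fst F) xs) = \<infinity>" by simp
  have fin: "finite (supp_w \<omega>)" and pos: "\<omega> g > 0"
    using fp g unfolding fractional_polymorphism_def supp_w_def by (auto simp: order_le_less)
  have "(\<Sum>g \<in> supp_w \<omega>. ereal (\<omega> g) * snd F (app_op g (fst F) xs))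
          \<le> ereal (1 / real m) * sum_list (map (snd F) xs)"
    using fp F len xs unfolding fractional_polymorphism_def by blast
  moreover have "(\<Sum>g \<in> supp_w \<omega>. ereal (\<omega> g) * snd F (app_op g (fst F) xs)) = \<infinity>"
    unfolding sum_Pinfty using fin g inf pos by auto
  moreover have "sum_list (map (snd F) xs) \<noteq> \<infinity>"
    by (rule sum_list_ereal_not_PInf) (use xs in auto)
  then have "ereal (1 / real m) * sum_list (map (snd F) xs) \<noteq> \<infinity>"
    using m by (cases "sum_list (map (snd F) xs)") auto
  ultimately show False by simp
qed

subsection \<open>Pushforward of a distribution on operations\<close>

definition image_weights ::
  "(('a list \<Rightarrow> 'a) \<Rightarrow> 'h) \<Rightarrow> (('a list \<Rightarrow> 'a) \<Rightarrow> real) \<Rightarrow> 'h \<Rightarrow> real" where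
  "image_weights L \<omega> h = sum \<omega> {g \<in> supp_w \<omega>. L g = h}"

text \<open>Finiteness of the left-hand costs is what allows the weights of operations with a common
  image to be merged.\<close>
definition weighted_family_bound ::
  "(('a list \<Rightarrow> 'a) \<Rightarrow> real) \<Rightarrow> (('a list \<Rightarrow> 'a) \<Rightarrow> 'b list \<Rightarrow> 'b) \<Rightarrow> nat \<Rightarrow> 'b costfun
     \<Rightarrow> 'b list list \<Rightarrow> bool" where
  "weighted_family_bound \<omega> L m F xs \<longleftrightarrow>
     (\<forall>g \<in> supp_w \<omega>. \<bar>snd F (app_op (L g) (fst F) xs)\<bar> \<noteq> \<infinity>) \<and>
     (\<Sum>g \<in> supp_w \<omega>. ereal (\<omega> g) * snd F (app_op (L g) (fst F) xs))
        \<le> ereal (1 / real m) * sum_list (map (snd F) xs)"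

lemma supp_w_image_weights:
  assumes "finite (supp_w \<omega>)" and "\<forall>g. \<omega> g \<ge> 0"
  shows "supp_w (image_weights L \<omega>) = L ` supp_w \<omega>"
proof (intro set_eqI iffI)
  fix h assume h: "h \<in> supp_w (image_weights L \<omega>)"
  show "h \<in> L ` supp_w \<omega>"
  proof (rule ccontr)
    assume "h \<notin> L ` supp_w \<omega>"
    then have "{g \<in> supp_w \<omega>. L g = h} = {}" by blast
    then have "image_weights L \<omega> h = 0"
      unfolding image_weights_def by (simp only: sum.empty)
    with h show False by (simp add: supp_w_def)
  qed
next
  fix h assume "h \<in> L ` supp_w \<omega>"
  then obtain g where "g \<in> supp_w \<omega>" "L g = h" by blast
  moreover have "\<forall>g \<in> supp_w \<omega>. \<omega> g > 0"
    using assms(2) unfolding supp_w_def by (simp add: order_less_le)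
  ultimately have "image_weights L \<omega> h > 0"
    unfolding image_weights_def by (intro sum_pos) (use assms(1) in auto)
  then show "h \<in> supp_w (image_weights L \<omega>)" unfolding supp_w_def by simp
qed

lemma sum_image_weights:
  assumes "finite (supp_w \<omega>)" and "\<forall>g. \<omega> g \<ge> 0"
  shows "sum (image_weights L \<omega>) (supp_w (image_weights L \<omega>)) = sum \<omega> (supp_w \<omega>)"
  using sum.image_gen[OF assms(1), of \<omega> L]
  by (simp add: supp_w_image_weights[OF assms] image_weights_def)

lemma sum_image_weights_mult:
  assumes "finite (supp_w \<omega>)" and "\<forall>g. \<omega> g \<ge> 0"
    and fin: "\<forall>g \<in> supp_w \<omega>. \<bar>\<psi> (L g)\<bar> \<noteq> \<infinity>"
  shows "(\<Sum>h \<in> supp_w (image_weights L \<omega>). ereal (image_weights L \<omega> h) * \<psi> h)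
       = (\<Sum>g \<in> supp_w \<omega>. ereal (\<omega> g) * \<psi> (L g))"
proof -
  define S where "S = supp_w \<omega>"
  define r where "r h = real_of_ereal (\<psi> h)" for h
  have \<psi>: "\<psi> h = ereal (r h)" if "h \<in> L ` S" for h
    using fin that unfolding r_def S_def by (auto simp: ereal_real')
  have "(\<Sum>h \<in> L ` S. ereal (image_weights L \<omega> h) * \<psi> h)
      = ereal (\<Sum>h \<in> L ` S. sum \<omega> {g \<in> S. L g = h} * r h)"
    by (auto simp: image_weights_def S_def[symmetric] \<psi> intro!: sum.cong)
  also have "(\<Sum>h \<in> L ` S. sum \<omega> {g \<in> S. L g = h} * r h)
      = (\<Sum>h \<in> L ` S. \<Sum>g \<in> {g \<in> S. L g = h}. \<omega> g * r (L g))"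
    by (auto simp: sum_distrib_right intro!: sum.cong)
  also have "\<dots> = ereal (\<Sum>g \<in> S. \<omega> g * r (L g))"
    using sum.image_gen[OF assms(1), of "\<lambda>g. \<omega> g * r (L g)" L] by (simp add: S_def)
  also have "\<dots> = (\<Sum>g \<in> S. ereal (\<omega> g) * \<psi> (L g))"
    by (auto simp: \<psi> intro!: sum.cong)
  finally show ?thesis
    by (simp add: supp_w_image_weights[OF assms(1,2)] S_def)
qed

lemma fractional_polymorphism_image_weights:
  assumes fin: "finite (supp_w \<omega>)" and nonneg: "\<forall>g. \<omega> g \<ge> 0" and one: "sum \<omega> (supp_w \<omega>) = 1"
    and ops: "\<forall>g \<in> supp_w \<omega>. operation E m (L g)"
    and bound: "\<forall>F \<in> \<Gamma>. \<forall>xs. length xs = m \<and> (\<forall>x \<in> set xs. x \<in> tuples E (fst F) \<and> snd F x < \<infinity>)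
                  \<longrightarrow> weighted_family_bound \<omega> L m F xs"
  shows "fractional_polymorphism E \<Gamma> m (image_weights L \<omega>)"
  unfolding fractional_polymorphism_def
proof (intro conjI ballI allI impI)
  show "finite (supp_w (image_weights L \<omega>))"
    using fin by (simp add: supp_w_image_weights[OF fin nonneg])
  show "image_weights L \<omega> h \<ge> 0" for h
    using nonneg by (simp add: image_weights_def sum_nonneg)
  show "sum (image_weights L \<omega>) (supp_w (image_weights L \<omega>)) = 1"
    using one by (simp add: sum_image_weights[OF fin nonneg])
  show "operation E m h" if "h \<in> supp_w (image_weights L \<omega>)" for h
    using ops that by (auto simp: supp_w_image_weights[OF fin nonneg])
  fix F xs
  assume "F \<in> \<Gamma>" and "length xs = m \<and> (\<forall>x \<in> set xs. x \<in> tuples E (fst F) \<and> snd F x < \<infinity>)"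
  then have "weighted_family_bound \<omega> L m F xs" using bound by blast
  then show "(\<Sum>h \<in> supp_w (image_weights L \<omega>).
                 ereal (image_weights L \<omega> h) * snd F (app_op h (fst F) xs))
               \<le> ereal (1 / real m) * sum_list (map (snd F) xs)"
    unfolding weighted_family_bound_def
    using sum_image_weights_mult[OF fin nonneg, of "\<lambda>h. snd F (app_op h (fst F) xs)" L] by simp
qed

lemma cyclic_fp_image_weights:
  assumes "finite (supp_w \<omega>)" and "\<forall>g. \<omega> g \<ge> 0"
    and "\<forall>g \<in> supp_w \<omega>. \<forall>x \<in> tuples E m. L g x = L g (rotate1 x)"
  shows "cyclic_fp E m (image_weights L \<omega>)"
  using assms(3) by (auto simp: cyclic_fp_def supp_w_image_weights[OF assms(1,2)])

lemma weighted_family_bound_crisp: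
  assumes "\<forall>g \<in> supp_w \<omega>. snd F (app_op (L g) (fst F) xs) = 0" and "\<forall>x \<in> set xs. snd F x = 0"
  shows "weighted_family_bound \<omega> L m F xs"
proof -
  have "sum_list (map (snd F) xs) = 0"
    using assms(2) by (induction xs) auto
  then show ?thesis
    using assms(1) by (simp add: weighted_family_bound_def)
qed

subsection \<open>Lifting operations to D'\<close>

text \<open>On a mixed column the value is picked from the column's set of entries, so it lies in the
  domain and does not change under rotation.\<close>
definition lift_op :: "('a list \<Rightarrow> 'a) \<Rightarrow> ('v \<times> 'a) list \<Rightarrow> 'v \<times> 'a" where
  "lift_op g ys = (if \<forall>y \<in> set ys. \<forall>y' \<in> set ys. fst y = fst y'
     then (fst (hd ys), g (map snd ys)) else (SOME y. y \<in> set ys))"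

lemma lift_op_common_fst:
  assumes "ys \<noteq> []" and "\<forall>y \<in> set ys. fst y = v"
  shows "lift_op g ys = (v, g (map snd ys))"
  using assms by (simp add: lift_op_def hd_in_set)

lemma lift_op_rotate1:
  assumes "\<forall>x \<in> tuples A (length ys). g x = g (rotate1 x)" and "set (map snd ys) \<subseteq> A"
  shows "lift_op g (rotate1 ys) = lift_op g ys"
proof (cases "ys = []")
  case False
  then have hd: "hd (rotate1 ys) \<in> set ys" "hd ys \<in> set ys"
    by (metis hd_in_set rotate1_is_Nil_conv set_rotate1)+
  have "map snd ys \<in> tuples A (length ys)"
    using assms(2) by (simp add: tuples_def)
  then have g: "g (map snd (rotate1 ys)) = g (map snd ys)"
    using assms(1) by (simp only: rotate1_map[symmetric])
  have "fst (hd (rotate1 ys)) = fst (hd ys)" if "\<forall>y \<in> set ys. \<forall>y' \<in> set ys. fst y = fst y'"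
    using that hd by blast
  then show ?thesis
    unfolding lift_op_def set_rotate1 using g by presburger
qed simp

lemma app_op_lift_op:
  assumes "\<forall>x \<in> set xs. map fst x = vs" and "xs \<noteq> []"
  shows "app_op (lift_op g) (length vs) xs = zip vs (app_op g (length vs) (map (map snd) xs))"
proof (rule nth_equalityI)
  fix j assume "j < length (app_op (lift_op g) (length vs) xs)"
  then have j: "j < length vs" by simp
  have len: "length x = length vs" if "x \<in> set xs" for x
    using assms(1) that by (metis length_map)
  define col where "col = map (\<lambda>x. x ! j) xs"
  have "fst (x ! j) = vs ! j" if "x \<in> set xs" for x
    using assms(1) that j len by (metis nth_map)
  then have "\<forall>y \<in> set col. fst y = vs ! j" by (auto simp: col_def)
  moreover have "col \<noteq> []" using assms(2) by (simp add: col_def)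
  ultimately have "lift_op g col = (vs ! j, g (map snd col))"
    by (simp add: lift_op_common_fst)
  moreover have "map snd col = map (\<lambda>y. y ! j) (map (map snd) xs)"
    using j len by (simp add: col_def)
  ultimately have "lift_op g col = zip vs (app_op g (length vs) (map (map snd) xs)) ! j"
    using j by simp
  then show "app_op (lift_op g) (length vs) xs ! j
      = zip vs (app_op g (length vs) (map (map snd) xs)) ! j"
    using j by (simp add: col_def)
qed simp

lemma lift_fun_app_op_lift_op:
  assumes "\<forall>x \<in> set xs. map fst x = vs" and "xs \<noteq> []"
  shows "lift_fun f vs (app_op (lift_op g) (length vs) xs) = f (app_op g (length vs) (map (map snd) xs))"
  by (simp add: app_op_lift_op[OF assms] lift_fun_def)

lemma mem_D': "p \<in> D' D V T c sc \<longleftrightarrow> fst p \<in> V \<and> snd p \<in> Dv D V T c sc (fst p)"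
  by (cases p) (auto simp: D'_def Dv'_def)

lemma Dv_subset: "v \<in> V \<Longrightarrow> Dv D V T c sc v \<subseteq> D"
  by (auto simp: Dv_def feasible_sol_def)

lemma map_snd_in_tuples:
  assumes "x \<in> tuples (D' D V T c sc) n"
  shows "map snd x \<in> tuples D n"
proof -
  have "snd p \<in> D" if "p \<in> set x" for p
  proof -
    have "p \<in> D' D V T c sc" using assms that by (auto simp: tuples_def)
    then have "fst p \<in> V" and "snd p \<in> Dv D V T c sc (fst p)" by (simp_all add: mem_D')
    from Dv_subset[OF this(1)] this(2) show ?thesis by (rule subsetD)
  qed
  then show ?thesis using assms by (auto simp: tuples_def)
qed

lemma objective_less_PInf:
  "finite T \<Longrightarrow> objective T c sc \<sigma> < \<infinity> \<longleftrightarrow> (\<forall>t \<in> T. snd (c t) (map \<sigma> (sc t)) \<noteq> \<infinity>)"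
  unfolding objective_def by (simp add: less_top[symmetric] sum_Pinfty)

context
  fixes D :: "'a set" and \<Gamma> :: "'a costfun set"
    and V :: "'v set" and T :: "'t set"
    and c :: "'t \<Rightarrow> 'a costfun" and sc :: "'t \<Rightarrow> 'v list"
    and m :: nat and \<omega> :: "('a list \<Rightarrow> 'a) \<Rightarrow> real"
  assumes inst: "vcsp_instance D \<Gamma> V T c sc"
    and fp: "fractional_polymorphism D \<Gamma> m \<omega>"
    and m: "m > 0"
begin

lemma feasible_sol_pointwise:
  assumes g: "g \<in> supp_w \<omega>" and S: "\<And>i. i < m \<Longrightarrow> feasible_sol D V T c sc (S i)"
  shows "feasible_sol D V T c sc (\<lambda>u. g (map (\<lambda>i. S i u) [0..<m]))"
proof -
  define \<sigma> where "\<sigma> u = g (map (\<lambda>i. S i u) [0..<m])" for u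
  have op: "operation D m g" using fp g unfolding fractional_polymorphism_def by blast
  have finT: "finite T" using inst unfolding vcsp_instance_def by blast
  have SD: "S i u \<in> D" if "i < m" "u \<in> V" for i u
    using S that unfolding feasible_sol_def by blast
  have "map (\<lambda>i. S i u) [0..<m] \<in> tuples D m" if "u \<in> V" for u
    using SD that by (auto simp: tuples_def)
  then have "\<sigma> ` V \<subseteq> D"
    using op by (auto simp: \<sigma>_def operation_def)
  moreover have "snd (c t) (map \<sigma> (sc t)) \<noteq> \<infinity>" if t: "t \<in> T" for t
  proof -
    have ct: "c t \<in> \<Gamma>" "length (sc t) = fst (c t)" "set (sc t) \<subseteq> V"
      using inst t unfolding vcsp_instance_def by auto
    define xs where "xs = map (\<lambda>i. map (S i) (sc t)) [0..<m]"
    have "snd (c t) (map (S i) (sc t)) < \<infinity>" if "i < m" for i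
      using S[OF that] t unfolding feasible_sol_def objective_less_PInf[OF finT]
      by (simp add: less_top)
    then have "snd (c t) (app_op g (fst (c t)) xs) < \<infinity>"
      using SD ct by (intro fractional_polymorphism_cost_finite[OF fp ct(1) g _ m])
        (auto simp: xs_def tuples_def)
    moreover have "app_op g (fst (c t)) xs = map \<sigma> (sc t)"
      by (rule nth_equalityI) (auto simp: ct(2)[symmetric] xs_def \<sigma>_def o_def)
    ultimately show ?thesis by simp
  qed
  ultimately show ?thesis
    unfolding \<sigma>_def[symmetric] feasible_sol_def objective_less_PInf[OF finT] by blast
qed

lemma Dv_closed:
  assumes g: "g \<in> supp_w \<omega>" and len: "length as = m" and as: "set as \<subseteq> Dv D V T c sc v"
  shows "g as \<in> Dv D V T c sc v"
proof -
  have "\<forall>i<m. \<exists>\<sigma>. feasible_sol D V T c sc \<sigma> \<and> \<sigma> v = as ! i"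
    using as len nth_mem unfolding Dv_def by fastforce
  then obtain S where S: "\<And>i. i < m \<Longrightarrow> feasible_sol D V T c sc (S i) \<and> S i v = as ! i"
    by metis
  have "map (\<lambda>i. S i v) [0..<m] = as"
    by (rule nth_equalityI) (auto simp: len S)
  then show ?thesis
    using feasible_sol_pointwise[OF g] S unfolding Dv_def by force
qed

lemma lift_op_in_Dv':
  assumes g: "g \<in> supp_w \<omega>" and ne: "col \<noteq> []" and fst: "\<forall>y \<in> set col. fst y = v"
    and col: "set col \<subseteq> D' D V T c sc" and len: "length col = m"
  shows "lift_op g col \<in> Dv' D V T c sc v"
proof -
  have "\<forall>y \<in> set col. snd y \<in> Dv D V T c sc v"
    using col fst mem_D' by (metis subsetD)
  then have "set (map snd col) \<subseteq> Dv D V T c sc v" by auto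
  then have "g (map snd col) \<in> Dv D V T c sc v"
    using Dv_closed[OF g] len by simp
  then show ?thesis
    using lift_op_common_fst[OF ne fst] by (simp add: Dv'_def)
qed

lemma operation_lift_op:
  assumes g: "g \<in> supp_w \<omega>"
  shows "operation (D' D V T c sc) m (lift_op g)"
  unfolding operation_def
proof
  fix x assume "x \<in> tuples (D' D V T c sc) m"
  then have len: "length x = m" and x: "set x \<subseteq> D' D V T c sc"
    unfolding tuples_def by auto
  then have ne: "x \<noteq> []" using m by auto
  show "lift_op g x \<in> D' D V T c sc"
  proof (cases "\<forall>y \<in> set x. \<forall>y' \<in> set x. fst y = fst y'")
    case True
    then have "\<forall>y \<in> set x. fst y = fst (hd x)" using hd_in_set[OF ne] by blast
    moreover have "fst (hd x) \<in> V"
      using x hd_in_set[OF ne] mem_D' by blast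
    ultimately show ?thesis
      using lift_op_in_Dv'[OF g ne _ x len] by (auto simp: D'_def)
  next
    case False
    then have "lift_op g x = (SOME y. y \<in> set x)"
      unfolding lift_op_def by (rule if_not_P)
    then show ?thesis
      using x ne by (metis hd_in_set someI subsetD)
  qed
qed

lemma weighted_family_bound_lift_fun:
  assumes valid: "valid_language D \<Gamma>" and t: "t \<in> T" and len: "length xs = m"
    and xs: "\<forall>x \<in> set xs. x \<in> tuples (D' D V T c sc) (fst (c t)) \<and> lift_fun (snd (c t)) (sc t) x < \<infinity>"
  shows "weighted_family_bound \<omega> lift_op m (fst (c t), lift_fun (snd (c t)) (sc t)) xs"
proof -
  define f where "f = snd (c t)"
  define vs where "vs = sc t"
  define ys where "ys = map (map snd) xs"
  have ct: "c t \<in> \<Gamma>" and n: "fst (c t) = length vs"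
    using inst t unfolding vcsp_instance_def vs_def by auto
  have vc: "valid_costfun D (c t)"
    using valid ct unfolding valid_language_def by blast
  have fst_xs: "\<forall>x \<in> set xs. map fst x = vs" and f_xs: "\<forall>x \<in> set xs. f (map snd x) < \<infinity>"
    using xs by (auto simp: lift_fun_def f_def vs_def split: if_splits)
  have ys: "\<forall>y \<in> set ys. y \<in> tuples D (fst (c t)) \<and> snd (c t) y < \<infinity>"
    using xs f_xs map_snd_in_tuples by (fastforce simp: ys_def f_def)
  have lift: "lift_fun f vs (app_op (lift_op g) (length vs) xs) = f (app_op g (length vs) ys)" for g
    using lift_fun_app_op_lift_op[OF fst_xs] len m by (auto simp: ys_def)
  have "\<bar>f (app_op g (length vs) ys)\<bar> \<noteq> \<infinity>" if g: "g \<in> supp_w \<omega>" for g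
  proof (rule valid_costfun_finite[OF vc, unfolded n, folded f_def])
    show "app_op g (length vs) ys \<in> tuples D (length vs)"
      using fp g ys len n unfolding fractional_polymorphism_def
      by (intro app_op_in_tuples) (auto simp: ys_def)
    show "f (app_op g (length vs) ys) < \<infinity>"
      using fractional_polymorphism_cost_finite[OF fp ct g _ m ys] len by (simp add: ys_def n f_def)
  qed
  moreover have "length ys = m" using len by (simp add: ys_def)
  with fp ct ys have "(\<Sum>g \<in> supp_w \<omega>. ereal (\<omega> g) * snd (c t) (app_op g (fst (c t)) ys))
      \<le> ereal (1 / real m) * sum_list (map (snd (c t)) ys)"
    unfolding fractional_polymorphism_def by blast
  moreover have "map f ys = map (lift_fun f vs) xs"
    using fst_xs by (auto simp: ys_def lift_fun_def)
  ultimately show ?thesis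
    by (simp add: weighted_family_bound_def lift f_def[symmetric] vs_def[symmetric] n)
qed

lemma weighted_family_bound_lifted_language:
  assumes valid: "valid_language D \<Gamma>"
    and F: "F \<in> lifted_language D V T c sc" and len: "length xs = m"
    and xs: "\<forall>x \<in> set xs. x \<in> tuples (D' D V T c sc) (fst F) \<and> snd F x < \<infinity>"
  shows "weighted_family_bound \<omega> lift_op m F xs"
  using F unfolding lifted_language_def
proof (elim UnE UN_E insertE emptyE CollectE exE conjE)
  fix t assume t: "t \<in> T" and F: "F = (fst (c t), lift_fun (snd (c t)) (sc t))"
  show ?thesis
    using weighted_family_bound_lift_fun[OF valid t len] xs by (simp add: F)
next
  fix t assume t: "t \<in> T" and F: "F = (fst (c t), dom_fun (lift_fun (snd (c t)) (sc t)))"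
  have xs': "\<forall>x \<in> set xs. x \<in> tuples (D' D V T c sc) (fst (c t)) \<and> lift_fun (snd (c t)) (sc t) x < \<infinity>"
    using xs by (auto simp: F dom_fun_def split: if_splits)
  have "\<forall>g \<in> supp_w \<omega>. lift_fun (snd (c t)) (sc t) (app_op (lift_op g) (fst (c t)) xs) < \<infinity>"
    using weighted_family_bound_lift_fun[OF valid t len xs']
    by (auto simp: weighted_family_bound_def less_top)
  then show ?thesis
    using xs' by (intro weighted_family_bound_crisp) (auto simp: F dom_fun_def)
next
  fix v assume v: "v \<in> V" and F: "F = (1, unary_fun (Dv' D V T c sc v))"
  have xs': "\<forall>x \<in> set xs. \<exists>y. x = [y] \<and> y \<in> Dv' D V T c sc v"
    using xs by (auto simp: F unary_fun_def split: if_splits)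
  define col where "col = map (\<lambda>x. x ! 0) xs"
  have "lift_op g col \<in> Dv' D V T c sc v" if "g \<in> supp_w \<omega>" for g
    using xs' len m v
    by (intro lift_op_in_Dv'[OF that]) (auto simp: col_def Dv'_def D'_def)
  moreover have "app_op h 1 xs = [h col]" for h
    using xs' by (auto simp: app_op_def col_def intro!: arg_cong[of _ _ h])
  ultimately show ?thesis
    using xs' by (intro weighted_family_bound_crisp) (auto simp: F unary_fun_def)
next
  assume F: "F = (2, eq_fun)"
  have xs': "\<forall>x \<in> set xs. length x = 2 \<and> x ! 0 = x ! 1"
    using xs by (auto simp: F eq_fun_def split: if_splits)
  then have "map (\<lambda>x. x ! 0) xs = map (\<lambda>x. x ! 1) xs" by simp
  moreover have "app_op h 2 xs ! 0 = h (map (\<lambda>x. x ! 0) xs)"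
    and "app_op h 2 xs ! 1 = h (map (\<lambda>x. x ! 1) xs)" for h :: "('v \<times> 'a) list \<Rightarrow> 'v \<times> 'a"
    by (rule nth_app_op, simp)+
  ultimately have "app_op h 2 xs ! 0 = app_op h 2 xs ! 1" for h :: "('v \<times> 'a) list \<Rightarrow> 'v \<times> 'a"
    by metis
  then show ?thesis
    using xs' by (intro weighted_family_bound_crisp) (auto simp: F eq_fun_def)
qed

lemma fractional_polymorphism_lift_op:
  assumes "valid_language D \<Gamma>"
  shows "fractional_polymorphism (D' D V T c sc) (lifted_language D V T c sc) m
           (image_weights lift_op \<omega>)"
  using fp operation_lift_op weighted_family_bound_lifted_language[OF assms]
  by (intro fractional_polymorphism_image_weights) (auto simp: fractional_polymorphism_def)

lemma cyclic_fp_lift_op: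
  assumes cyc: "cyclic_fp D m \<omega>"
  shows "cyclic_fp (D' D V T c sc) m (image_weights lift_op \<omega>)"
proof (rule cyclic_fp_image_weights)
  show "finite (supp_w \<omega>)" and "\<forall>g. \<omega> g \<ge> 0"
    using fp by (auto simp: fractional_polymorphism_def)
  show "\<forall>g \<in> supp_w \<omega>. \<forall>x \<in> tuples (D' D V T c sc) m. lift_op g x = lift_op g (rotate1 x)"
  proof (intro ballI)
    fix g x assume g: "g \<in> supp_w \<omega>" and x: "x \<in> tuples (D' D V T c sc) m"
    have "map snd x \<in> tuples D m" by (rule map_snd_in_tuples[OF x])
    then show "lift_op g x = lift_op g (rotate1 x)"
      using cyc g x by (intro lift_op_rotate1[symmetric]) (auto simp: cyclic_fp_def tuples_def)
  qed
qed

end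

theorem lemma3p4:
  fixes D :: "'a set" and \<Gamma> :: "'a costfun set"
    and V :: "'v set" and T :: "'t set"
    and c :: "'t \<Rightarrow> 'a costfun" and sc :: "'t \<Rightarrow> 'v list"
    and m :: nat
  assumes "valid_language D \<Gamma>"
    and "vcsp_instance D \<Gamma> V T c sc"
    and "feasible_instance D V T c sc"
    and "m > 1"
    and "\<exists>\<omega>. fractional_polymorphism D \<Gamma> m \<omega> \<and> cyclic_fp D m \<omega>"
  shows "\<exists>\<omega>'. fractional_polymorphism (D' D V T c sc) (lifted_language D V T c sc) m \<omega>'
              \<and> cyclic_fp (D' D V T c sc) m \<omega>'"
proof -
  obtain \<omega> where fp: "fractional_polymorphism D \<Gamma> m \<omega>" and cyc: "cyclic_fp D m \<omega>"
    using assms(5) by blast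
  have m: "m > 0" using assms(4) by simp
  show ?thesis
    using fractional_polymorphism_lift_op[OF assms(2) fp m assms(1)] cyclic_fp_lift_op[OF assms(2) fp m cyc]
    by blast
qed

end
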